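(* Consider an ideal gas of $N$ identical particles with single-particle energy eigenvalues $\varepsilon_1,\varepsilon_2,\ldots$ and canonical partition function $Z(\beta,N)=\sum_E\omega(E,N)e^{-\beta E}$. Suppose that $$Z(\beta,N)=m_{(\lambda)^q}\big(e^{-\beta\varepsilon_1},e^{-\beta\varepsilon_2},\ldots\big)+\sum_{I:\ \lambda_{I,1}\le q} M^I\, m_{(\lambda)_I}\big(e^{-\beta\varepsilon_1},e^{-\beta\varepsilon_2},\ldots\big),$$ where $(\lambda)^q$ is an integer partition of $N$ with largest part $\lambda_1=q$, the sum runs over partitions $(\lambda)_I=(\lambda_{I,1},\lambda_{I,2},\ldots)$ of $N$ with largest part $\lambda_{I,1}\le q$, and each $M^I$ is a nonnegative integer. Then the maximum occupation number of the system is $q$.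
   Context: $\omega(E,N)$ denotes the number of microstates with $N$ particles and total energy $E$. The monomial symmetric function of a partition $(\lambda)=(\lambda_1,\ldots,\lambda_l)$ is $m_{(\lambda)}(x_1,x_2,\ldots)=\sum x_{i_1}^{\lambda_1}x_{i_2}^{\lambda_2}\cdots x_{i_l}^{\lambda_l}$, summed over all distinct monomials of this form with distinct indices $i_1,\ldots,i_l$. With $x_i=e^{-\beta\varepsilon_i}$, a term $m_{(\lambda)}$ counts microstates in which $\lambda_1$ particles occupy one single-particle state, $\lambda_2$ particles occupy another, and so on. The maximum occupation number is the largest number of particles that can occupy a single single-particle quantum state in some microstate counted by $\omega(E,N)$. *)

theory Defs
  imports Main "HOL-Library.Multiset"
begin

text \<open>An occupation configuration is a function
n :: nat => nat giving the number of particles in each single-particle state.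
The monomial x^n = prod_i x_i^(n i), with x_i = exp(-beta eps_i), is
the Boltzmann weight of a microstate with that configuration.\<close>

definition occ_support :: "(nat \<Rightarrow> nat) \<Rightarrow> nat set" where
  "occ_support n = {i. n i \<noteq> 0}"

definition occ_shape :: "(nat \<Rightarrow> nat) \<Rightarrow> nat multiset" where
  "occ_shape n = image_mset n (mset_set (occ_support n))"

definition is_partition :: "nat \<Rightarrow> nat multiset \<Rightarrow> bool" where
  "is_partition N lam \<longleftrightarrow> 0 \<notin># lam \<and> sum_mset lam = N"

definition largest_part :: "nat multiset \<Rightarrow> nat" where
  "largest_part lam = Max_mset lam"

text \<open>Monomial symmetric function m_lam in infinitely many variables, as a formal
power series: its coefficient at the monomial x^n.\<close>
definition msym_coeff :: "nat multiset \<Rightarrow> (nat \<Rightarrow> nat) \<Rightarrow> nat" where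
  "msym_coeff lam n = (if finite (occ_support n) \<and> occ_shape n = lam then 1 else 0)"

text \<open>A system is described by w, where w n is the number of microstates with
occupation configuration n.  Its canonical partition function is the formal series
Z = sum_n w n * x^n (= sum_E omega(E,N) e^(-beta E)); so its coefficient at x^n is w n.\<close>
definition Z_coeff :: "((nat \<Rightarrow> nat) \<Rightarrow> nat) \<Rightarrow> (nat \<Rightarrow> nat) \<Rightarrow> nat" where
  "Z_coeff w n = w n"

definition max_occupation :: "((nat \<Rightarrow> nat) \<Rightarrow> nat) \<Rightarrow> nat" where
  "max_occupation w = Max {n i | n i. w n > 0}"

end

theory Submission
  imports Defs
begin

text \<open>Since all coefficients M are nonnegative, no cancellation occurs in the expansion of Z:
a microstate is counted exactly when its monomial occurs in one of the monomial symmetric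
functions, whose shapes all have largest part at most q, so no state holds more than q
particles.  Conversely the leading term contributes every monomial of shape lam, in
particular one in which some state carries the part q.\<close>

lemma mem_occ_shape_imp_occupation:
  assumes "x \<in># occ_shape n"
  shows "\<exists>i. n i = x"
  using assms by (auto simp: occ_shape_def)

lemma occupation_le_Max_occ_shape:
  assumes "finite (occ_support n)"
  shows "n i \<le> Max_mset (occ_shape n)"
proof (cases "n i = 0")
  case False
  then have "i \<in> occ_support n" by (simp add: occ_support_def)
  then have "n i \<in># occ_shape n" using assms by (simp add: occ_shape_def)
  then show ?thesis by (intro Max_ge) auto
qed simp

lemma msym_coeff_nonzero_imp_occupation_le:
  assumes "msym_coeff mu n \<noteq> 0"
  shows "n i \<le> largest_part mu"
  using assms occupation_le_Max_occ_shape[of n i]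
  by (simp add: msym_coeff_def largest_part_def split: if_splits)

lemma occ_shape_of_list:
  assumes "0 \<notin> set xs"
  defines "n \<equiv> \<lambda>i. if i < length xs then xs ! i else 0"
  shows "occ_support n = {..<length xs}" and "occ_shape n = mset xs"
proof -
  show supp: "occ_support n = {..<length xs}"
    using assms by (auto simp: occ_support_def n_def) (metis gr0I nth_mem)
  have "occ_shape n = mset (map n [0..<length xs])"
    by (simp add: occ_shape_def supp mset_set_upto_eq_mset_upto)
  also have "map n [0..<length xs] = xs"
    by (rule nth_equalityI) (auto simp: n_def)
  finally show "occ_shape n = mset xs" .
qed

lemma ex_msym_coeff_eq_1:
  assumes "0 \<notin># lam"
  shows "\<exists>n. msym_coeff lam n = 1 \<and> occ_shape n = lam"
proof -
  obtain xs where xs: "mset xs = lam" using ex_mset by blast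
  with assms have "0 \<notin> set xs" by auto
  from occ_shape_of_list[OF this] show ?thesis
    unfolding msym_coeff_def xs by (metis finite_lessThan)
qed

lemma max_occupation_eqI:
  assumes "w n > 0" and "n i = q"
    and "\<forall>m. w m > 0 \<longrightarrow> (\<forall>j. m j \<le> q)"
  shows "max_occupation w = q"
proof -
  let ?S = "{m j | m j. w m > 0}"
  have "q \<in> ?S" using assms(1,2) by blast
  moreover have bound: "x \<le> q" if "x \<in> ?S" for x using that assms(3) by blast
  moreover have "finite ?S" using bound by (meson finite_atMost subsetI atMost_iff finite_subset)
  ultimately show ?thesis unfolding max_occupation_def by (intro antisym Max_ge Max.boundedI) auto
qed

theorem theorem2:
  fixes w :: "(nat \<Rightarrow> nat) \<Rightarrow> nat"
    and N q :: nat
    and lam :: "nat multiset"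
    and M :: "nat multiset \<Rightarrow> nat"
  assumes lam_part: "is_partition N lam"
    and lam_ne: "lam \<noteq> {#}"
    and lam_q: "largest_part lam = q"
    and Z_expansion: "\<forall>n. Z_coeff w n =
        msym_coeff lam n
        + (\<Sum>mu \<in> {mu. is_partition N mu \<and> mu \<noteq> {#} \<and> largest_part mu \<le> q}.
             M mu * msym_coeff mu n)"
  shows "max_occupation w = q"
proof -
  let ?parts = "{mu. is_partition N mu \<and> mu \<noteq> {#} \<and> largest_part mu \<le> q}"
  have occupation_le: "\<forall>m. w m > 0 \<longrightarrow> (\<forall>j. m j \<le> q)"
  proof (intro allI impI)
    fix n i
    assume "w n > 0"
    obtain mu where "msym_coeff mu n \<noteq> 0" and "largest_part mu \<le> q"
    proof (cases "msym_coeff lam n = 0")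
      case True
      with \<open>w n > 0\<close> Z_expansion have "(\<Sum>mu \<in> ?parts. M mu * msym_coeff mu n) \<noteq> 0"
        by (simp add: Z_coeff_def)
      then obtain mu where "mu \<in> ?parts" and "M mu * msym_coeff mu n \<noteq> 0"
        by (rule sum.not_neutral_contains_not_neutral)
      with that show ?thesis by auto
    qed (use lam_q that in simp)
    then show "n i \<le> q"
      using msym_coeff_nonzero_imp_occupation_le[of mu n i] by linarith
  qed
  obtain n where n: "msym_coeff lam n = 1" "occ_shape n = lam"
    using ex_msym_coeff_eq_1 lam_part by (auto simp: is_partition_def)
  then have "w n > 0" using Z_expansion by (simp add: Z_coeff_def)
  have "q \<in># occ_shape n"
    using n lam_q lam_ne Max_in_mset[of lam] by (simp add: largest_part_def)
  then obtain i where "n i = q" using mem_occ_shape_imp_occupation by blast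
  show ?thesis using \<open>w n > 0\<close> \<open>n i = q\<close> occupation_le by (rule max_occupation_eqI)
qed

end
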